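(* Let $N\ge 2$ be an integer and $a\in\mathbb{C}$ a constant. Let $\zeta_1(\tau),\dots,\zeta_N(\tau)$ be (complex-valued) solutions, on a domain of the independent variable $\tau$ on which $\zeta_n(\tau)\neq\zeta_m(\tau)$ for all $n\neq m$, of the system $$\zeta_n''=2\sum_{m=1,\,m\neq n}^{N} a\,\frac{\zeta_n'\,\zeta_m'}{\zeta_n-\zeta_m},\qquad n=1,\dots,N,$$ where primes denote differentiation with respect to $\tau$. Define the monic polynomial $$\Pi(\zeta,\tau)=\prod_{n=1}^{N}\bigl(\zeta-\zeta_n(\tau)\bigr)=\zeta^N+\sum_{m=1}^{N}\gamma_m(\tau)\,\zeta^{N-m}.$$ Then $\Pi$ satisfies the nonlinear PDE $$\Pi_{\tau\tau}\,(\Pi_\zeta)^2+(1-a)\Bigl\{\Pi_{\zeta\zeta}\,(\Pi_\tau)^2-\Pi_\zeta\,\bigl[(\Pi_\tau)^2\bigr]_\zeta\Bigr\}=\Psi\,\Pi,$$ where $\Psi(\zeta,\tau)$ is a polynomial in $\zeta$ of degree (at most) $2N-4$, with coefficients depending on $\tau$.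
   Context: Subscripts on $\Pi$ denote partial derivatives, e.g. $\Pi_\zeta=\partial\Pi/\partial\zeta$, $\Pi_{\tau\tau}=\partial^2\Pi/\partial\tau^2$. The coefficients $\gamma_m(\tau)$ are the coefficients of $\Pi$ as a polynomial in $\zeta$ (so they are the elementary symmetric functions of the $\zeta_n$ up to sign). *)

theory Defs
  imports "HOL-Complex_Analysis.Complex_Analysis" "HOL-Computational_Algebra.Polynomial"
begin

definition Pi_poly :: "nat \<Rightarrow> (nat \<Rightarrow> complex \<Rightarrow> complex) \<Rightarrow> complex \<Rightarrow> complex \<Rightarrow> complex" where
  "Pi_poly N z \<zeta> \<tau> = (\<Prod>n\<in>{1..N}. (\<zeta> - z n \<tau>))"

end

theory Submission
  imports Defs
begin

text \<open>Symmetrising the equations of motion over pairs of roots turns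
  the acceleration part of \<open>\<Pi>\<^sub>\<tau>\<^sub>\<tau>\<close> into \<open>-a\<close> times its velocity part \<open>Ptt\<close>, so
  \<open>\<Pi>\<^sub>\<tau>\<^sub>\<tau> = (1 - a) Ptt\<close> with \<open>deg Ptt \<le> N - 2\<close>. The left-hand side of the PDE is then
  \<open>(1 - a)\<close> times a polynomial of degree at most \<open>3N - 4\<close> which vanishes at every root
  \<open>\<zeta>\<^sub>k\<close>: splitting off the factor \<open>\<zeta> - \<zeta>\<^sub>k\<close> shows that its three terms cancel there.
  As the roots are distinct, \<open>\<Pi>\<close> divides it, with a quotient of degree at most \<open>2N - 4\<close>.\<close>

definition root_prod :: "'b set \<Rightarrow> ('b \<Rightarrow> 'a::comm_ring_1) \<Rightarrow> 'a poly" where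
  "root_prod I w = (\<Prod>n\<in>I. [:- w n, 1:])"

text \<open>When the roots \<open>w\<close> move with velocities \<open>v\<close> and accelerations \<open>u\<close>, the first time
  derivative of \<open>root_prod I w\<close> is \<open>root_prod_dt I w v\<close> and the second one is
  \<open>root_prod_pairs I w v + root_prod_dt I w u\<close>.\<close>

definition root_prod_dt :: "'b set \<Rightarrow> ('b \<Rightarrow> 'a::comm_ring_1) \<Rightarrow> ('b \<Rightarrow> 'a) \<Rightarrow> 'a poly" where
  "root_prod_dt I w v = (\<Sum>n\<in>I. smult (- v n) (root_prod (I - {n}) w))"

definition root_prod_pairs :: "'b set \<Rightarrow> ('b \<Rightarrow> 'a::comm_ring_1) \<Rightarrow> ('b \<Rightarrow> 'a) \<Rightarrow> 'a poly" where
  "root_prod_pairs I w v =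
     (\<Sum>n\<in>I. \<Sum>m\<in>I - {n}. smult (v n * v m) (root_prod (I - {n} - {m}) w))"

text \<open>If \<open>\<Pi>\<^sub>\<tau>\<^sub>\<tau> = (1 - a) Ptt\<close>, the left-hand side of the PDE is \<open>(1 - a)\<close> times
  \<open>pde_operator \<Pi> \<Pi>\<^sub>\<tau> Ptt\<close>.\<close>

definition pde_operator :: "'a::idom poly \<Rightarrow> 'a poly \<Rightarrow> 'a poly \<Rightarrow> 'a poly" where
  "pde_operator P Pt Ptt = Ptt * (pderiv P)\<^sup>2 + pderiv (pderiv P) * Pt\<^sup>2 - pderiv P * pderiv (Pt\<^sup>2)"

lemma poly_root_prod [simp]: "poly (root_prod I w) x = (\<Prod>n\<in>I. x - w n)"
  by (simp add: root_prod_def poly_prod)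

lemma root_prod_remove:
  "finite I \<Longrightarrow> k \<in> I \<Longrightarrow> root_prod I w = [:- w k, 1:] * root_prod (I - {k}) w"
  unfolding root_prod_def by (simp add: prod.remove)

lemma root_prod_nonzero: "root_prod I (w :: _ \<Rightarrow> 'a::idom) \<noteq> 0"
  unfolding root_prod_def by (cases "finite I") (auto simp: prod_zero_iff)

lemma degree_root_prod: "finite I \<Longrightarrow> degree (root_prod I (w :: _ \<Rightarrow> 'a::idom)) = card I"
  unfolding root_prod_def by (subst degree_prod_eq_sum_degree) auto

lemma degree_root_prod_dt_le:
  "finite I \<Longrightarrow> degree (root_prod_dt I (w :: _ \<Rightarrow> 'a::idom) v) \<le> card I - 1"
  unfolding root_prod_dt_def
  by (intro degree_sum_le order.trans[OF degree_smult_le]) (auto simp: degree_root_prod)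

lemma degree_root_prod_pairs_le:
  "finite I \<Longrightarrow> degree (root_prod_pairs I (w :: _ \<Rightarrow> 'a::idom) v) \<le> card I - 2"
  unfolding root_prod_pairs_def
  by (intro degree_sum_le order.trans[OF degree_smult_le]) (auto simp: degree_root_prod)

lemma root_prod_dvdI:
  fixes Q :: "'a::idom poly"
  assumes "finite I" "inj_on w I" "\<And>k. k \<in> I \<Longrightarrow> poly Q (w k) = 0"
  shows "root_prod I w dvd Q"
  using assms
proof (induction I rule: finite_induct)
  case empty
  then show ?case by (simp add: root_prod_def)
next
  case (insert k I)
  then obtain R where R: "Q = root_prod I w * R"
    by (auto simp: inj_on_insert elim: dvdE)
  have "poly (root_prod I w) (w k) \<noteq> 0"
    using insert.hyps insert.prems(1) by (auto simp: prod_zero_iff inj_on_def)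
  moreover have "poly Q (w k) = 0"
    using insert.prems(2) by simp
  ultimately have "[:- w k, 1:] dvd R"
    using R by (simp add: poly_eq_0_iff_dvd)
  then have "[:- w k, 1:] * root_prod I w dvd Q"
    using R by (metis dvd_refl mult.commute mult_dvd_mono)
  then show ?case
    using insert.hyps by (simp add: root_prod_def)
qed

lemma root_prod_dt_remove:
  assumes "finite I" "k \<in> I"
  shows "root_prod_dt I w v =
           smult (- v k) (root_prod (I - {k}) w) + [:- w k, 1:] * root_prod_dt (I - {k}) w v"
proof -
  have "smult (- v n) (root_prod (I - {n}) w) =
          [:- w k, 1:] * smult (- v n) (root_prod (I - {k} - {n}) w)" if "n \<in> I - {k}" for n
  proof -
    have "root_prod (I - {n}) w = [:- w k, 1:] * root_prod (I - {n} - {k}) w"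
      using assms that by (intro root_prod_remove) auto
    moreover have "I - {n} - {k} = I - {k} - {n}"
      by auto
    ultimately show ?thesis
      by (metis mult_smult_right)
  qed
  then show ?thesis
    using assms by (simp add: root_prod_dt_def sum.remove sum_distrib_left)
qed

lemma poly_root_prod_pairs_root:
  assumes I: "finite I" and k: "k \<in> I"
  shows "poly (root_prod_pairs I w v) (w k) = - 2 * v k * poly (root_prod_dt (I - {k}) w v) (w k)"
proof -
  define F where "F n m = v n * v m * poly (root_prod (I - {n} - {m}) w) (w k)" for n m
  have F_sym: "F n m = F m n" for n m
    unfolding F_def by (simp add: Diff_insert2[symmetric] insert_commute mult.commute)
  have "(\<Sum>m\<in>I - {n}. F n m) = F k n" if n: "n \<in> I - {k}" for n
  proof -
    have "(\<Sum>m\<in>I - {n}. F n m) = F n k + (\<Sum>m\<in>I - {n} - {k}. F n m)"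
      using I k n by (subst sum.remove[of _ k]) auto
    also have "(\<Sum>m\<in>I - {n} - {k}. F n m) = 0"
    proof (intro sum.neutral ballI)
      fix m assume "m \<in> I - {n} - {k}"
      then have "poly (root_prod (I - {n} - {m}) w) (w k) = 0"
        unfolding poly_root_prod using I k n by (intro prod_zero) auto
      then show "F n m = 0"
        by (simp add: F_def)
    qed
    finally show ?thesis
      by (simp add: F_sym)
  qed
  then have "poly (root_prod_pairs I w v) (w k) = 2 * (\<Sum>n\<in>I - {k}. F k n)"
    using I k by (simp add: root_prod_pairs_def F_def poly_sum sum.remove)
  moreover have "\<And>n. I - {k} - {n} = I - {n} - {k}"
    by auto
  ultimately show ?thesis
    by (simp add: root_prod_dt_def F_def poly_sum sum_distrib_left sum_negf mult_ac)
qed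

lemma smult_sum_right: "smult c (\<Sum>i\<in>A. f i) = (\<Sum>i\<in>A. smult c (f i))"
  by (induction A rule: infinite_finite_induct) (simp_all add: smult_add_right)

lemma sum_off_diagonal_swap:
  assumes "finite I"
  shows "(\<Sum>n\<in>I. \<Sum>m\<in>I - {n}. f n m) = (\<Sum>n\<in>I. \<Sum>m\<in>I - {n}. f m n :: 'a::comm_monoid_add)"
proof -
  have "\<And>n. I - {n} = {m \<in> I. n \<noteq> m}" "\<And>n. I - {n} = {m \<in> I. m \<noteq> n}"
    by auto
  then show ?thesis
    using sum.swap_restrict[OF assms assms, of f "\<lambda>x y. x \<noteq> y"] by simp
qed

lemma root_prod_dt_pairwise_accel:
  fixes w v u :: "'b \<Rightarrow> 'a::field"
  assumes I: "finite I" and inj: "inj_on w I"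
    and u: "\<And>n. n \<in> I \<Longrightarrow> u n = 2 * (\<Sum>m\<in>I - {n}. a * v n * v m / (w n - w m))"
  shows "root_prod_dt I w u = - smult a (root_prod_pairs I w v)"
proof -
  txt \<open>Pair the terms for \<open>(n, m)\<close> and \<open>(m, n)\<close>: the difference of the linear factors
    \<open>(x - w m) - (x - w n)\<close> cancels the denominator \<open>w n - w m\<close>.\<close>
  define c where "c n m = a * v n * v m / (w n - w m)" for n m
  define g where "g n m = smult (c n m) ([:- w m, 1:] * root_prod (I - {n} - {m}) w)" for n m
  have "- root_prod_dt I w u = (\<Sum>n\<in>I. \<Sum>m\<in>I - {n}. g n m) + (\<Sum>n\<in>I. \<Sum>m\<in>I - {n}. g n m)"
  proof -
    have "smult (u n) (root_prod (I - {n}) w) = (\<Sum>m\<in>I - {n}. g n m + g n m)" if "n \<in> I" for n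
      using I that
      by (simp add: u c_def g_def smult_sum sum_distrib_left root_prod_remove[of "I - {n}"]
          flip: smult_add_left)
    then show ?thesis
      by (simp add: root_prod_dt_def sum_negf sum_distrib_left)
  qed
  also have "\<dots> = (\<Sum>n\<in>I. \<Sum>m\<in>I - {n}. g n m + g m n)"
    by (simp add: sum_off_diagonal_swap[OF I, of g] sum.distrib)
  also have "\<dots> = (\<Sum>n\<in>I. \<Sum>m\<in>I - {n}. smult (a * (v n * v m)) (root_prod (I - {n} - {m}) w))"
  proof (intro sum.cong refl)
    fix n m assume "n \<in> I" "m \<in> I - {n}"
    then have "w n \<noteq> w m"
      using inj by (auto dest: inj_onD)
    then have c_swap: "c m n = - c n m" and c_mult: "c n m * (w n - w m) = a * (v n * v m)"
      by (simp_all add: c_def field_simps)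
    define X where "X = root_prod (I - {n} - {m}) w"
    have "I - {m} - {n} = I - {n} - {m}"
      by auto
    then have "g n m + g m n = smult (c n m) ([:- w m, 1:] * X - [:- w n, 1:] * X)"
      by (simp add: g_def X_def c_swap smult_diff_right del: mult_pCons_left)
    also have "[:- w m, 1:] * X - [:- w n, 1:] * X = smult (w n - w m) X"
      by (simp add: smult_diff_left)
    finally show "g n m + g m n = smult (a * (v n * v m)) X"
      by (simp add: c_mult)
  qed
  also have "\<dots> = smult a (root_prod_pairs I w v)"
    by (simp add: root_prod_pairs_def smult_sum_right)
  finally show ?thesis
    by (simp add: minus_equation_iff[of "root_prod_dt I w u"])
qed

lemma poly_pde_operator_root_prod_root:
  fixes w v :: "'b \<Rightarrow> 'a::idom"
  assumes "finite I" "k \<in> I"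
  shows "poly (pde_operator (root_prod I w) (root_prod_dt I w v) (root_prod_pairs I w v)) (w k) = 0"
proof -
  define L A B where "L = [:- w k, 1:]" and "A = root_prod (I - {k}) w"
    and "B = root_prod_dt (I - {k}) w v"
  define T where "T = smult (- v k) A + L * B"
  have P: "root_prod I w = L * A"
    unfolding L_def A_def using assms by (rule root_prod_remove)
  have Pt: "root_prod_dt I w v = T"
    unfolding T_def L_def A_def B_def using assms by (rule root_prod_dt_remove)
  have Ptt: "poly (root_prod_pairs I w v) (w k) = - 2 * v k * poly B (w k)"
    unfolding B_def using assms by (rule poly_root_prod_pairs_root)
  have L: "poly L (w k) = 0" "pderiv L = 1"
    by (simp_all add: L_def pderiv_pCons)
  have "poly (pde_operator (L * A) T (root_prod_pairs I w v)) (w k) =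
          - 2 * v k * poly B (w k) * (poly A (w k))\<^sup>2
          + 2 * poly (pderiv A) (w k) * (- v k * poly A (w k))\<^sup>2
          - poly A (w k) * (2 * (- v k * poly A (w k)) * (- v k * poly (pderiv A) (w k) + poly B (w k)))"
    by (simp add: pde_operator_def Ptt L T_def pderiv_mult pderiv_add pderiv_diff pderiv_smult pderiv_power)
  also have "\<dots> = 0"
    by (simp add: algebra_simps power2_eq_square)
  finally show ?thesis
    unfolding P Pt .
qed

lemma degree_pderiv_le: "degree (pderiv p) \<le> degree p - 1"
  by (rule degree_le) (simp add: coeff_pderiv coeff_eq_0)

lemma degree_pde_operator_le:
  assumes "degree P \<le> N" "degree Pt \<le> N - 1" "degree Ptt \<le> N - 2"
  shows "degree (pde_operator P Pt Ptt) \<le> 3 * N - 4"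
proof -
  have P1: "degree (pderiv P) \<le> N - 1" and P2: "degree (pderiv (pderiv P)) \<le> N - 2"
    using assms(1) degree_pderiv_le[of P] degree_pderiv_le[of "pderiv P"] by linarith+
  have T2: "degree (Pt\<^sup>2) \<le> 2 * N - 2" and dT2: "degree (pderiv (Pt\<^sup>2)) \<le> 2 * N - 3"
    using assms(2) degree_power_le[of Pt 2] degree_pderiv_le[of "Pt\<^sup>2"] by linarith+
  have "degree ((pderiv P)\<^sup>2) \<le> 2 * N - 2"
    using P1 degree_power_le[of "pderiv P" 2] by linarith
  then have "degree (Ptt * (pderiv P)\<^sup>2) \<le> 3 * N - 4"
    using assms(3) degree_mult_le[of Ptt "(pderiv P)\<^sup>2"] by linarith
  moreover have "degree (pderiv (pderiv P) * Pt\<^sup>2) \<le> 3 * N - 4"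
    using P2 T2 degree_mult_le[of "pderiv (pderiv P)" "Pt\<^sup>2"] by linarith
  moreover have "degree (pderiv P * pderiv (Pt\<^sup>2)) \<le> 3 * N - 4"
    using P1 dT2 degree_mult_le[of "pderiv P" "pderiv (Pt\<^sup>2)"] by linarith
  ultimately show ?thesis
    unfolding pde_operator_def by (intro degree_diff_le degree_add_le)
qed

lemma degree_div_dvd:
  fixes p q :: "'a::field poly"
  assumes "p dvd q" "p \<noteq> 0"
  shows "degree (q div p) = degree q - degree p"
proof -
  obtain r where "q = p * r"
    using assms(1) by (elim dvdE)
  with assms(2) show ?thesis
    by (cases "r = 0") (simp_all add: degree_mult_eq)
qed

lemma root_prod_dvd_pde_operator:
  fixes w v :: "'b \<Rightarrow> 'a::idom"
  assumes "finite I" "inj_on w I"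
  shows "root_prod I w dvd pde_operator (root_prod I w) (root_prod_dt I w v) (root_prod_pairs I w v)"
  using assms by (intro root_prod_dvdI poly_pde_operator_root_prod_root)

lemma degree_pde_operator_root_prod_div_le:
  fixes w v :: "'b \<Rightarrow> 'a::field"
  assumes I: "finite I" and inj: "inj_on w I"
  shows "degree (pde_operator (root_prod I w) (root_prod_dt I w v) (root_prod_pairs I w v)
                   div root_prod I w) \<le> 2 * card I - 4"
proof -
  have "degree (pde_operator (root_prod I w) (root_prod_dt I w v) (root_prod_pairs I w v))
          \<le> 3 * card I - 4"
    using I by (intro degree_pde_operator_le degree_root_prod_dt_le degree_root_prod_pairs_le)
      (simp add: degree_root_prod)
  then show ?thesis
    using root_prod_dvd_pde_operator[OF I inj]
    by (simp add: degree_div_dvd root_prod_nonzero degree_root_prod I)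
qed

lemma deriv_poly: "deriv (poly p) = poly (pderiv p)"
  by (simp add: fun_eq_iff DERIV_imp_deriv)

lemma deriv_poly_power: "deriv (\<lambda>x. poly p x ^ n) = poly (pderiv (p ^ n))"
  by (simp only: poly_power[symmetric] deriv_poly)

lemma has_field_derivative_root_prod:
  assumes "\<And>n. n \<in> I \<Longrightarrow> ((\<lambda>s. w s n) has_field_derivative v n) (at t)"
  shows "((\<lambda>s. poly (root_prod I (w s)) x) has_field_derivative poly (root_prod_dt I (w t) v) x) (at t)"
proof -
  have "((\<lambda>s. \<Prod>n\<in>I. x - w s n) has_field_derivative (\<Sum>n\<in>I. - v n * (\<Prod>m\<in>I - {n}. x - w t m))) (at t)"
    by (rule has_field_derivative_prod) (auto intro!: derivative_eq_intros assms)
  then show ?thesis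
    by (simp add: root_prod_dt_def poly_sum)
qed

lemma has_field_derivative_root_prod_dt:
  assumes "\<And>n. n \<in> I \<Longrightarrow> ((\<lambda>s. w s n) has_field_derivative v t n) (at t)"
    and "\<And>n. n \<in> I \<Longrightarrow> ((\<lambda>s. v s n) has_field_derivative u n) (at t)"
  shows "((\<lambda>s. poly (root_prod_dt I (w s) (v s)) x) has_field_derivative
           poly (root_prod_pairs I (w t) (v t) + root_prod_dt I (w t) u) x) (at t)"
proof -
  have "((\<lambda>s. \<Sum>n\<in>I. - v s n * poly (root_prod (I - {n}) (w s)) x) has_field_derivative
          (\<Sum>n\<in>I. - u n * poly (root_prod (I - {n}) (w t)) x
                   + poly (root_prod_dt (I - {n}) (w t) (v t)) x * - v t n)) (at t)"
    by (intro DERIV_sum DERIV_mult DERIV_minus assms has_field_derivative_root_prod) auto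
  then show ?thesis
    by (simp add: root_prod_dt_def root_prod_pairs_def poly_sum sum_distrib_left sum_subtractf
        sum_negf algebra_simps)
qed

lemma deriv_poly_root_prod:
  assumes "open S" "\<tau> \<in> S" "\<And>n. n \<in> I \<Longrightarrow> z n holomorphic_on S"
  shows "deriv (\<lambda>s. poly (root_prod I (\<lambda>n. z n s)) x) \<tau> =
           poly (root_prod_dt I (\<lambda>n. z n \<tau>) (\<lambda>n. deriv (z n) \<tau>)) x"
  using assms by (intro DERIV_imp_deriv has_field_derivative_root_prod holomorphic_derivI) auto

lemma deriv_deriv_poly_root_prod:
  assumes "open S" "\<tau> \<in> S" "\<And>n. n \<in> I \<Longrightarrow> z n holomorphic_on S"
  shows "deriv (\<lambda>t. deriv (\<lambda>s. poly (root_prod I (\<lambda>n. z n s)) x) t) \<tau> =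
           poly (root_prod_pairs I (\<lambda>n. z n \<tau>) (\<lambda>n. deriv (z n) \<tau>)
                 + root_prod_dt I (\<lambda>n. z n \<tau>) (\<lambda>n. deriv (deriv (z n)) \<tau>)) x"
proof -
  have "\<forall>\<^sub>F t in nhds \<tau>. deriv (\<lambda>s. poly (root_prod I (\<lambda>n. z n s)) x) t =
          poly (root_prod_dt I (\<lambda>n. z n t) (\<lambda>n. deriv (z n) t)) x"
    using eventually_nhds_in_open[OF assms(1,2)]
    by (rule eventually_mono) (rule deriv_poly_root_prod[OF assms(1) _ assms(3)])
  then have "deriv (\<lambda>t. deriv (\<lambda>s. poly (root_prod I (\<lambda>n. z n s)) x) t) \<tau> =
               deriv (\<lambda>t. poly (root_prod_dt I (\<lambda>n. z n t) (\<lambda>n. deriv (z n) t)) x) \<tau>"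
    by (rule deriv_cong_ev) simp
  also have "\<dots> = poly (root_prod_pairs I (\<lambda>n. z n \<tau>) (\<lambda>n. deriv (z n) \<tau>)
                 + root_prod_dt I (\<lambda>n. z n \<tau>) (\<lambda>n. deriv (deriv (z n)) \<tau>)) x"
    using assms
    by (intro DERIV_imp_deriv has_field_derivative_root_prod_dt holomorphic_derivI holomorphic_deriv)
      auto
  finally show ?thesis .
qed

lemma deriv_deriv_poly_root_prod_pairwise_accel:
  assumes "open S" "\<tau> \<in> S" "\<And>n. n \<in> I \<Longrightarrow> z n holomorphic_on S"
    and "finite I" "inj_on (\<lambda>n. z n \<tau>) I"
    and "\<And>n. n \<in> I \<Longrightarrow> deriv (deriv (z n)) \<tau> =
           2 * (\<Sum>m\<in>I - {n}. a * deriv (z n) \<tau> * deriv (z m) \<tau> / (z n \<tau> - z m \<tau>))"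
  shows "deriv (\<lambda>t. deriv (\<lambda>s. poly (root_prod I (\<lambda>n. z n s)) x) t) \<tau> =
           (1 - a) * poly (root_prod_pairs I (\<lambda>n. z n \<tau>) (\<lambda>n. deriv (z n) \<tau>)) x"
proof -
  have "root_prod_dt I (\<lambda>n. z n \<tau>) (\<lambda>n. deriv (deriv (z n)) \<tau>) =
          - smult a (root_prod_pairs I (\<lambda>n. z n \<tau>) (\<lambda>n. deriv (z n) \<tau>))"
    using assms(4-6) by (rule root_prod_dt_pairwise_accel)
  with deriv_deriv_poly_root_prod[where I = I and z = z, OF assms(1-3)] show ?thesis
    by (simp add: algebra_simps del: poly_root_prod)
qed

theorem lemmaD1:
  fixes N :: nat and a :: complex and z :: "nat \<Rightarrow> complex \<Rightarrow> complex" and S :: "complex set"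
  assumes N2: "N \<ge> 2"
    and S_open: "open S"
    and hol: "\<And>n. n \<in> {1..N} \<Longrightarrow> z n holomorphic_on S"
    and distinct: "\<And>n m \<tau>. n \<in> {1..N} \<Longrightarrow> m \<in> {1..N} \<Longrightarrow> n \<noteq> m \<Longrightarrow> \<tau> \<in> S \<Longrightarrow> z n \<tau> \<noteq> z m \<tau>"
    and ode: "\<And>n \<tau>. n \<in> {1..N} \<Longrightarrow> \<tau> \<in> S \<Longrightarrow>
        deriv (deriv (z n)) \<tau> =
          2 * (\<Sum>m\<in>{1..N} - {n}. a * deriv (z n) \<tau> * deriv (z m) \<tau> / (z n \<tau> - z m \<tau>))"
  shows "\<exists>\<Psi> :: complex \<Rightarrow> complex poly.
           \<forall>\<tau>\<in>S. degree (\<Psi> \<tau>) \<le> 2 * N - 4 \<and>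
             (\<forall>\<zeta>.
                deriv (\<lambda>t. deriv (\<lambda>s. Pi_poly N z \<zeta> s) t) \<tau> * (deriv (\<lambda>x. Pi_poly N z x \<tau>) \<zeta>)\<^sup>2
                + (1 - a) * ( deriv (\<lambda>x. deriv (\<lambda>y. Pi_poly N z y \<tau>) x) \<zeta> * (deriv (\<lambda>s. Pi_poly N z \<zeta> s) \<tau>)\<^sup>2
                              - deriv (\<lambda>x. Pi_poly N z x \<tau>) \<zeta> * deriv (\<lambda>x. (deriv (\<lambda>s. Pi_poly N z x s) \<tau>)\<^sup>2) \<zeta>)
                = poly (\<Psi> \<tau>) \<zeta> * Pi_poly N z \<zeta> \<tau>)"
proof -
  define I where "I = {1..N}"
  define P Pt Ptt where "P \<tau> = root_prod I (\<lambda>n. z n \<tau>)"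
    and "Pt \<tau> = root_prod_dt I (\<lambda>n. z n \<tau>) (\<lambda>n. deriv (z n) \<tau>)"
    and "Ptt \<tau> = root_prod_pairs I (\<lambda>n. z n \<tau>) (\<lambda>n. deriv (z n) \<tau>)" for \<tau>
  have I: "finite I" "card I = N" and hol_I: "\<And>n. n \<in> I \<Longrightarrow> z n holomorphic_on S"
    using hol by (simp_all add: I_def)
  have inj: "inj_on (\<lambda>n. z n \<tau>) I" if "\<tau> \<in> S" for \<tau>
    unfolding inj_on_def I_def using distinct[OF _ _ _ that] by blast
  have Pi: "Pi_poly N z x \<tau> = poly (P \<tau>) x" for x \<tau>
    by (simp add: Pi_poly_def P_def I_def)
  have Pi_t: "deriv (\<lambda>s. poly (P s) x) \<tau> = poly (Pt \<tau>) x" if "\<tau> \<in> S" for x \<tau>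
    unfolding P_def Pt_def using S_open that hol_I by (rule deriv_poly_root_prod)
  have Pi_tt: "deriv (\<lambda>t. deriv (\<lambda>s. poly (P s) x) t) \<tau> = (1 - a) * poly (Ptt \<tau>) x"
    if "\<tau> \<in> S" for x \<tau>
    unfolding P_def Ptt_def using S_open that hol_I I(1) inj[OF that]
    by (rule deriv_deriv_poly_root_prod_pairwise_accel) (simp_all add: ode[OF _ that] I_def)
  define Q where "Q \<tau> = pde_operator (P \<tau>) (Pt \<tau>) (Ptt \<tau>)" for \<tau>
  have degree: "degree (Q \<tau> div P \<tau>) \<le> 2 * N - 4" if "\<tau> \<in> S" for \<tau>
    using degree_pde_operator_root_prod_div_le[OF I(1) inj[OF that]]
    by (simp add: Q_def P_def Pt_def Ptt_def I(2))
  have factor: "poly (P \<tau>) x * poly (Q \<tau> div P \<tau>) x = poly (pde_operator (P \<tau>) (Pt \<tau>) (Ptt \<tau>)) x"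
    if "\<tau> \<in> S" for x \<tau>
    using root_prod_dvd_pde_operator[OF I(1) inj[OF that]] unfolding Q_def P_def Pt_def Ptt_def
    by (metis dvd_mult_div_cancel poly_mult)
  show ?thesis
    by (intro exI[of _ "\<lambda>\<tau>. smult (1 - a) (Q \<tau> div P \<tau>)"] ballI conjI allI
        order.trans[OF degree_smult_le] degree)
      (simp_all add: Pi Pi_t Pi_tt factor deriv_poly deriv_poly_power mult.assoc pde_operator_def
        algebra_simps)
qed

end
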